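(* Assume the setup in the context. Suppose $\{\mathcal{Z}_k\}_{k=1}^\infty$ is a sequence of compact subsets of $\mathcal{Z}$ with $P(\mathcal{Z}_k)\to1$ as $k\to\infty$, and suppose that for every $k\in\mathbb{N}$, every $j_1,j_2\in J$, and every $K\in\mathcal{K}_{j_1}$, $C\in\mathcal{K}_{j_2}$ with $K\cap C=\emptyset$, $$P\big(\{z\in\mathcal{Z}_k: V(T,z)=V(K,z)=V(C,z)\}\big)=0.$$ Then the argmin of $Q(t,z)$ over $t\in T$ is unique almost surely.
   Context: $z$ is an absolutely continuous random vector in $\mathbb{R}^{d_z}$ with distribution $P$, and $\mathcal{Z}\subset\mathbb{R}^{d_z}$ is measurable with $P(z\in\mathcal{Z})=1$. $T=\bigcup_{j\in J}T_j$ is a disjoint union of finitely or countably many second-countable Hausdorff manifolds, possibly with boundary or corner. $Q:T\times\mathcal{Z}\to\mathbb{R}$ is continuous on each $T_j\times\mathcal{Z}$. For $K\subset T$, $V(K,z)=\inf_{t\in K}Q(t,z)$. For each $j\in J$, $\mathcal{K}_j$ is a countable collection of compact neighborhoods in $T_j$ that separates points: for any $j_1,j_2\in J$ and any $t\in T_{j_1}$, $s\in T_{j_2}$ with $t\neq s$, there exist $K\in\mathcal{K}_{j_1}$ and $C\in\mathcal{K}_{j_2}$ with $K\cap C=\emptyset$, $t\in K$, $s\in C$. *)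

theory Defs
  imports "HOL-Probability.Probability"
begin

text \<open>Model space for n-manifolds with corners: the closed orthant [0,inf)^n
  inside the abstract Euclidean space of dimension n.  (Open subsets of it
  also cover the boundaryless and boundary cases.)\<close>
definition corner_model :: "nat \<Rightarrow> (nat \<Rightarrow> real) topology" where
  "corner_model n = subtopology (Euclidean_space n) {x. \<forall>i. 0 \<le> x i}"

definition manifold_with_corners :: "'a topology \<Rightarrow> nat \<Rightarrow> bool" where
  "manifold_with_corners X n \<longleftrightarrow>
     Hausdorff_space X \<and> second_countable X \<and>
     (\<forall>x\<in>topspace X. \<exists>U W. openin X U \<and> x \<in> U \<and> openin (corner_model n) W \<and>
        subtopology X U homeomorphic_space subtopology (corner_model n) W)"

definition compact_nbhd :: "'a topology \<Rightarrow> 'a set \<Rightarrow> bool" where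
  "compact_nbhd X K \<longleftrightarrow> compactin X K \<and> X interior_of K \<noteq> {}"

definition Vinf :: "('a \<Rightarrow> 'z \<Rightarrow> real) \<Rightarrow> 'a set \<Rightarrow> 'z \<Rightarrow> ereal" where
  "Vinf Q K z = (INF t\<in>K. ereal (Q t z))"

definition argmin_set :: "('a \<Rightarrow> 'z \<Rightarrow> real) \<Rightarrow> 'a set \<Rightarrow> 'z \<Rightarrow> 'a set" where
  "argmin_set Q T z = {t\<in>T. \<forall>u\<in>T. Q t z \<le> Q u z}"

end

theory Submission
  imports Defs
begin

text \<open>Outside a null set, z lies in some compact Z_k. If it had two distinct minimisers
  t and s, the separating family would provide disjoint K \<ni> t and C \<ni> s from countably
  many candidates, and the infima of Q over T, K and C would all equal the common minimum,
  so z would lie in one of countably many null tie sets.\<close>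

lemma compact_nbhd_subset_topspace: "compact_nbhd X K \<Longrightarrow> K \<subseteq> topspace X"
  unfolding compact_nbhd_def by (rule compactin_subset_topspace) blast

lemma argmin_set_values_eq:
  assumes "t \<in> argmin_set Q T z" "s \<in> argmin_set Q T z"
  shows "Q t z = Q s z"
  using assms by (force simp: argmin_set_def intro: antisym)

lemma Vinf_eq_argmin_value:
  assumes "x \<in> A" "A \<subseteq> T" "x \<in> argmin_set Q T z"
  shows "Vinf Q A z = ereal (Q x z)"
  unfolding Vinf_def
proof (rule antisym)
  show "(INF u\<in>A. ereal (Q u z)) \<le> ereal (Q x z)"
    using assms(1) by (rule INF_lower)
  show "ereal (Q x z) \<le> (INF u\<in>A. ereal (Q u z))"
    using assms by (intro INF_greatest) (auto simp: argmin_set_def)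
qed

lemma Vinf_tie_at_two_argmins:
  assumes t: "t \<in> argmin_set Q T z" "t \<in> K" "K \<subseteq> T"
    and s: "s \<in> argmin_set Q T z" "s \<in> C" "C \<subseteq> T"
  shows "Vinf Q T z = Vinf Q K z \<and> Vinf Q K z = Vinf Q C z"
proof -
  have "t \<in> T" using t by (auto simp: argmin_set_def)
  then have "Vinf Q T z = ereal (Q t z)" using t(1) by (intro Vinf_eq_argmin_value) auto
  moreover have "Vinf Q K z = ereal (Q t z)" using t by (intro Vinf_eq_argmin_value)
  moreover have "Vinf Q C z = ereal (Q s z)" using s by (intro Vinf_eq_argmin_value)
  ultimately show ?thesis using argmin_set_values_eq[OF t(1) s(1)] by simp
qed

lemma argmin_not_unique_imp_tie:
  assumes "t \<in> argmin_set Q T z" "s \<in> argmin_set Q T z" "t \<noteq> s"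
    and separating: "\<And>t s. t \<in> T \<Longrightarrow> s \<in> T \<Longrightarrow> t \<noteq> s \<Longrightarrow>
      \<exists>(K, C)\<in>F. K \<subseteq> T \<and> C \<subseteq> T \<and> t \<in> K \<and> s \<in> C"
  shows "\<exists>(K, C)\<in>F. Vinf Q T z = Vinf Q K z \<and> Vinf Q K z = Vinf Q C z"
proof -
  have "t \<in> T" "s \<in> T" using assms(1,2) by (simp_all add: argmin_set_def)
  then obtain K C where KC: "(K, C) \<in> F" "K \<subseteq> T" "C \<subseteq> T" "t \<in> K" "s \<in> C"
    using separating assms(3) by blast
  then have "Vinf Q T z = Vinf Q K z \<and> Vinf Q K z = Vinf Q C z"
    using assms(1,2) by (intro Vinf_tie_at_two_argmins)
  with KC(1) show ?thesis by (intro bexI[of _ "(K, C)"]) auto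
qed

lemma (in prob_space) AE_in_Union_of_prob_to_1:
  assumes sets: "\<And>k. Z k \<in> events" and lim: "(\<lambda>k. prob (Z k)) \<longlonglongrightarrow> 1"
  shows "AE x in M. \<exists>k. x \<in> Z k"
proof -
  define U where "U = (\<Union>k. Z k)"
  have U: "U \<in> events" unfolding U_def using sets by auto
  have "1 \<le> prob U"
    using lim by (rule LIMSEQ_le_const2) (use U sets in \<open>auto simp: U_def intro!: finite_measure_mono\<close>)
  then have "prob U = 1" using prob_le_1 by (metis antisym)
  then have "AE x in M. x \<in> U" using U by (simp add: prob_eq_1)
  then show ?thesis by (simp add: U_def)
qed

lemma AE_avoids_countable_null_family:
  assumes "countable I" "\<And>i k. i \<in> I \<Longrightarrow> N i k \<in> null_sets M"
  shows "AE x in M. \<forall>i\<in>I. \<forall>k::nat. x \<notin> N i k"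
  using assms by (subst AE_ball_countable) (auto simp: AE_all_countable intro: AE_not_in)

theorem lemma2:
  fixes P :: "'z::euclidean_space measure"
    and Zset :: "'z set"
    and J :: "'j set"
    and Tj :: "'j \<Rightarrow> 'a set"
    and top :: "'j \<Rightarrow> 'a topology"
    and Q :: "'a \<Rightarrow> 'z \<Rightarrow> real"
    and KK :: "'j \<Rightarrow> 'a set set"
    and Zk :: "nat \<Rightarrow> 'z set"
  assumes P_prob: "prob_space P"
    and P_borel: "sets P = sets borel"
    and P_ac: "absolutely_continuous lborel P"
    and Z_meas: "Zset \<in> sets P"
    and Z_full: "measure P Zset = 1"
    and J_countable: "countable J"
    and Tj_top: "\<And>j. j \<in> J \<Longrightarrow> topspace (top j) = Tj j"
    and Tj_mfd: "\<And>j. j \<in> J \<Longrightarrow> \<exists>n. manifold_with_corners (top j) n"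
    and Tj_disj: "\<And>i j. i \<in> J \<Longrightarrow> j \<in> J \<Longrightarrow> i \<noteq> j \<Longrightarrow> Tj i \<inter> Tj j = {}"
    and Q_cont: "\<And>j. j \<in> J \<Longrightarrow>
        continuous_map (prod_topology (top j) (top_of_set Zset)) euclideanreal (\<lambda>(t, z). Q t z)"
    and KK_countable: "\<And>j. j \<in> J \<Longrightarrow> countable (KK j)"
    and KK_nbhd: "\<And>j K. j \<in> J \<Longrightarrow> K \<in> KK j \<Longrightarrow> compact_nbhd (top j) K"
    and KK_sep: "\<And>j1 j2 t s. j1 \<in> J \<Longrightarrow> j2 \<in> J \<Longrightarrow> t \<in> Tj j1 \<Longrightarrow> s \<in> Tj j2 \<Longrightarrow> t \<noteq> s \<Longrightarrow>
        \<exists>K\<in>KK j1. \<exists>C\<in>KK j2. K \<inter> C = {} \<and> t \<in> K \<and> s \<in> C"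
    and Zk_compact: "\<And>k. compact (Zk k)"
    and Zk_sub: "\<And>k. Zk k \<subseteq> Zset"
    and Zk_lim: "(\<lambda>k. measure P (Zk k)) \<longlonglongrightarrow> 1"
    and null_ties: "\<And>k j1 j2 K C. j1 \<in> J \<Longrightarrow> j2 \<in> J \<Longrightarrow> K \<in> KK j1 \<Longrightarrow> C \<in> KK j2 \<Longrightarrow>
        K \<inter> C = {} \<Longrightarrow>
        {z \<in> Zk k. Vinf Q (\<Union>j\<in>J. Tj j) z = Vinf Q K z \<and> Vinf Q K z = Vinf Q C z} \<in> null_sets P"
  shows "AE z in P. \<forall>t\<in>argmin_set Q (\<Union>j\<in>J. Tj j) z. \<forall>s\<in>argmin_set Q (\<Union>j\<in>J. Tj j) z. t = s"
proof -
  interpret prob_space P by (rule P_prob)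
  define T where "T = (\<Union>j\<in>J. Tj j)"
  define F where "F = {(K, C). \<exists>j1\<in>J. \<exists>j2\<in>J. K \<in> KK j1 \<and> C \<in> KK j2 \<and> K \<inter> C = {}}"
  have "F \<subseteq> (\<Union>j1\<in>J. KK j1) \<times> (\<Union>j2\<in>J. KK j2)" unfolding F_def by blast
  then have "countable F"
    by (rule countable_subset) (auto intro: countable_SIGMA countable_UN J_countable KK_countable)
  define tie where "tie = (\<lambda>(K, C) k. {z \<in> Zk k. Vinf Q T z = Vinf Q K z \<and> Vinf Q K z = Vinf Q C z})"
  have no_tie: "AE z in P. \<forall>KC\<in>F. \<forall>k. z \<notin> tie KC k"
    using \<open>countable F\<close> null_ties
    by (intro AE_avoids_countable_null_family) (auto simp: F_def T_def tie_def)
  have separating: "\<exists>(K, C)\<in>F. K \<subseteq> T \<and> C \<subseteq> T \<and> t \<in> K \<and> s \<in> C"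
    if ts: "t \<in> T" "s \<in> T" "t \<noteq> s" for t s
  proof -
    obtain j1 j2 where j: "j1 \<in> J" "j2 \<in> J" "t \<in> Tj j1" "s \<in> Tj j2"
      using ts(1,2) unfolding T_def by blast
    then obtain K C where KC: "K \<in> KK j1" "C \<in> KK j2" "K \<inter> C = {}" "t \<in> K" "s \<in> C"
      using KK_sep ts(3) by blast
    have "K \<subseteq> Tj j1" "C \<subseteq> Tj j2"
      using compact_nbhd_subset_topspace[OF KK_nbhd] Tj_top j KC by metis+
    then have "K \<subseteq> T" "C \<subseteq> T" unfolding T_def using j(1,2) by blast+
    moreover have "(K, C) \<in> F" unfolding F_def using j(1,2) KC(1-3) by blast
    ultimately show ?thesis using KC(4,5) by (intro bexI[of _ "(K, C)"]) auto
  qed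
  have "AE z in P. \<exists>k. z \<in> Zk k"
    using P_borel Zk_compact Zk_lim
    by (intro AE_in_Union_of_prob_to_1) (auto intro: borel_closed compact_imp_closed)
  then show ?thesis unfolding T_def[symmetric] using no_tie
  proof eventually_elim
    case (elim z)
    then obtain k where k: "z \<in> Zk k" by blast
    show ?case
    proof (intro ballI, rule ccontr)
      fix t s assume "t \<in> argmin_set Q T z" "s \<in> argmin_set Q T z" "t \<noteq> s"
      then have "\<exists>(K, C)\<in>F. Vinf Q T z = Vinf Q K z \<and> Vinf Q K z = Vinf Q C z"
        using separating by (rule argmin_not_unique_imp_tie)
      then show False using elim(2) k by (fastforce simp: tie_def)
    qed
  qed
qed

end
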